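(* Let $G$ be a finite group with subgroups $H_1,H_2$, and let $\Xi$ be a $G$-solitary linear character of $H_1$. There exists a linear character $\chi$ of $H_2$ with $\mathrm{Ind}^G_{H_1}\Xi\cong\mathrm{Ind}^G_{H_2}\chi$ if and only if $H_1$ and $H_2$ are conjugate subgroups of $G$.
   Context: A monomial structure on a representation $\rho\colon G\to\mathrm{Aut}(V)$ is a decomposition $V=\bigoplus_{x\in\Omega}\mathcal L_x$ into one-dimensional subspaces such that $G$ permutes the lines $\mathcal L_x$; the set $\{\mathcal L_x\}$ is then a $G$-set, and an isomorphism of monomial structures is an isomorphism of $G$-sets. A linear character $\Xi$ of $H\le G$ is $G$-solitary if $\mathrm{Ind}^G_H\Xi$ has a unique monomial structure up to isomorphism. *)

theory Defs
  imports "HOL-Algebra.Algebra" Complex_Main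
begin

text \<open>Complex representations are modelled concretely: the representation space is a
set V of functions of type 'g => complex (a complex subspace of the function space,
with pointwise operations), and the action is rho :: 'g => ('g => complex) => ('g => complex).\<close>

definition lin_char :: "('g, 'b) monoid_scheme \<Rightarrow> 'g set \<Rightarrow> ('g \<Rightarrow> complex) \<Rightarrow> bool" where
  "lin_char G H \<xi> \<longleftrightarrow>
     (\<forall>h\<in>H. \<xi> h \<noteq> 0) \<and> (\<forall>h\<in>H. \<forall>k\<in>H. \<xi> (h \<otimes>\<^bsub>G\<^esub> k) = \<xi> h * \<xi> k)"

definition ind_space :: "('g, 'b) monoid_scheme \<Rightarrow> 'g set \<Rightarrow> ('g \<Rightarrow> complex) \<Rightarrow> ('g \<Rightarrow> complex) set" where
  "ind_space G H \<xi> = {f. (\<forall>x. x \<notin> carrier G \<longrightarrow> f x = 0) \<and>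
        (\<forall>h\<in>H. \<forall>x\<in>carrier G. f (h \<otimes>\<^bsub>G\<^esub> x) = \<xi> h * f x)}"

definition ind_act :: "('g, 'b) monoid_scheme \<Rightarrow> 'g \<Rightarrow> ('g \<Rightarrow> complex) \<Rightarrow> ('g \<Rightarrow> complex)" where
  "ind_act G g f = (\<lambda>x. if x \<in> carrier G then f (x \<otimes>\<^bsub>G\<^esub> g) else 0)"

definition lin_on :: "('g \<Rightarrow> complex) set \<Rightarrow> (('g \<Rightarrow> complex) \<Rightarrow> ('h \<Rightarrow> complex)) \<Rightarrow> bool" where
  "lin_on V T \<longleftrightarrow> (\<forall>u\<in>V. \<forall>v\<in>V. \<forall>a b. T (\<lambda>x. a * u x + b * v x) = (\<lambda>y. a * T u y + b * T v y))"

definition rep_iso :: "('g, 'b) monoid_scheme \<Rightarrow> ('x \<Rightarrow> complex) set \<Rightarrow> ('g \<Rightarrow> ('x \<Rightarrow> complex) \<Rightarrow> ('x \<Rightarrow> complex))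
     \<Rightarrow> ('y \<Rightarrow> complex) set \<Rightarrow> ('g \<Rightarrow> ('y \<Rightarrow> complex) \<Rightarrow> ('y \<Rightarrow> complex)) \<Rightarrow> bool" where
  "rep_iso G V1 \<rho>1 V2 \<rho>2 \<longleftrightarrow> (\<exists>T. bij_betw T V1 V2 \<and>
      (\<forall>u\<in>V1. \<forall>v\<in>V1. \<forall>a b. T (\<lambda>x. a * u x + b * v x) = (\<lambda>y. a * T u y + b * T v y)) \<and>
      (\<forall>g\<in>carrier G. \<forall>v\<in>V1. T (\<rho>1 g v) = \<rho>2 g (T v)))"

definition monomial_structure :: "('g, 'b) monoid_scheme \<Rightarrow> ('x \<Rightarrow> complex) set
     \<Rightarrow> ('g \<Rightarrow> ('x \<Rightarrow> complex) \<Rightarrow> ('x \<Rightarrow> complex)) \<Rightarrow> ('x \<Rightarrow> complex) set set \<Rightarrow> bool" where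
  "monomial_structure G V \<rho> \<L> \<longleftrightarrow>
     finite \<L> \<and>
     (\<forall>L\<in>\<L>. \<exists>v\<in>V. v \<noteq> (\<lambda>x. 0) \<and> L = {(\<lambda>x. c * v x) | c. True}) \<and>
     (\<forall>v\<in>V. \<exists>!c. c \<in> (\<Pi>\<^sub>E L\<in>\<L>. L) \<and> v = (\<lambda>x. \<Sum>L\<in>\<L>. c L x)) \<and>
     (\<forall>g\<in>carrier G. \<forall>L\<in>\<L>. \<rho> g ` L \<in> \<L>)"

definition monomial_iso :: "('g, 'b) monoid_scheme \<Rightarrow> ('g \<Rightarrow> ('x \<Rightarrow> complex) \<Rightarrow> ('x \<Rightarrow> complex))
     \<Rightarrow> ('x \<Rightarrow> complex) set set \<Rightarrow> ('x \<Rightarrow> complex) set set \<Rightarrow> bool" where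
  "monomial_iso G \<rho> \<L>1 \<L>2 \<longleftrightarrow> (\<exists>\<phi>. bij_betw \<phi> \<L>1 \<L>2 \<and>
      (\<forall>g\<in>carrier G. \<forall>L\<in>\<L>1. \<phi> (\<rho> g ` L) = \<rho> g ` (\<phi> L)))"

definition G_solitary :: "('g, 'b) monoid_scheme \<Rightarrow> 'g set \<Rightarrow> ('g \<Rightarrow> complex) \<Rightarrow> bool" where
  "G_solitary G H \<xi> \<longleftrightarrow>
     (\<exists>\<L>. monomial_structure G (ind_space G H \<xi>) (ind_act G) \<L>) \<and>
     (\<forall>\<L>1 \<L>2. monomial_structure G (ind_space G H \<xi>) (ind_act G) \<L>1 \<longrightarrow>
               monomial_structure G (ind_space G H \<xi>) (ind_act G) \<L>2 \<longrightarrow>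
               monomial_iso G (ind_act G) \<L>1 \<L>2)"

end

theory Submission
  imports Defs
begin

text \<open>The induced representation \<open>Ind(H, \<xi>)\<close> carries a standard monomial structure whose
lines consist of the functions supported on a single right coset \<open>H y\<close>; as a \<open>G\<close>-set this is
the set of right cosets of \<open>H\<close>, and the stabiliser of the line at \<open>H y\<close> is \<open>y\<inverse> H y\<close>.

If \<open>H\<^sub>2 = g\<inverse> H\<^sub>1 g\<close>, left translation by \<open>g\<close> is an isomorphism from \<open>Ind(H\<^sub>1, \<Xi>)\<close>
onto the representation induced from the conjugated character. Conversely, an isomorphism
\<open>Ind(H\<^sub>1, \<Xi>) \<cong> Ind(H\<^sub>2, \<chi>)\<close> transports the standard monomial structure of the right-hand
side to a second monomial structure on \<open>Ind(H\<^sub>1, \<Xi>)\<close>. Since \<open>\<Xi>\<close> is solitary, the two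
structures are isomorphic \<open>G\<close>-sets, and isomorphic \<open>G\<close>-sets have the same point stabilisers;
so \<open>H\<^sub>1\<close>, the stabiliser of the line at the trivial coset, is a conjugate of \<open>H\<^sub>2\<close>.\<close>

section \<open>Linear maps between spaces of complex functions\<close>

definition lin_closed :: "('x \<Rightarrow> complex) set \<Rightarrow> bool" where
  "lin_closed V \<longleftrightarrow> (\<forall>u\<in>V. \<forall>v\<in>V. \<forall>a b. (\<lambda>x. a * u x + b * v x) \<in> V)"

lemma lin_closedD: "lin_closed V \<Longrightarrow> u \<in> V \<Longrightarrow> v \<in> V \<Longrightarrow> (\<lambda>x. a * u x + b * v x) \<in> V"
  unfolding lin_closed_def by blast

lemma lin_closed_smult: "lin_closed V \<Longrightarrow> u \<in> V \<Longrightarrow> (\<lambda>x. c * u x) \<in> V"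
  using lin_closedD[of V u u c 0] by simp

lemma lin_closed_zero: "lin_closed V \<Longrightarrow> u \<in> V \<Longrightarrow> (\<lambda>x. 0) \<in> V"
  using lin_closed_smult[of V u 0] by simp

lemma lin_closed_sum:
  assumes "lin_closed V" and "(\<lambda>x. 0) \<in> V" and "finite A" and "\<forall>i\<in>A. f i \<in> V"
  shows "(\<lambda>x. \<Sum>i\<in>A. f i x) \<in> V"
  using assms(3,4)
proof (induction A rule: finite_induct)
  case (insert i A)
  then show ?case
    using lin_closedD[OF assms(1), of "f i" "\<lambda>x. \<Sum>j\<in>A. f j x" 1 1] by simp
qed (use assms(2) in simp)

lemma lin_onD:
  "lin_on V T \<Longrightarrow> u \<in> V \<Longrightarrow> v \<in> V \<Longrightarrow> T (\<lambda>x. a * u x + b * v x) = (\<lambda>y. a * T u y + b * T v y)"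
  unfolding lin_on_def by blast

lemma lin_on_smult: "lin_on V T \<Longrightarrow> u \<in> V \<Longrightarrow> T (\<lambda>x. c * u x) = (\<lambda>y. c * T u y)"
  using lin_onD[of V T u u c 0] by simp

lemma lin_on_zero: "lin_on V T \<Longrightarrow> u \<in> V \<Longrightarrow> T (\<lambda>x. 0) = (\<lambda>y. 0)"
  using lin_on_smult[of V T u 0] by simp

lemma lin_on_sum:
  assumes "lin_closed V" and "lin_on V T" and "(\<lambda>x. 0) \<in> V"
    and "finite A" and "\<forall>i\<in>A. f i \<in> V"
  shows "T (\<lambda>x. \<Sum>i\<in>A. f i x) = (\<lambda>y. \<Sum>i\<in>A. T (f i) y)"
  using assms(4,5)
proof (induction A rule: finite_induct)
  case (insert i A)
  have "(\<lambda>x. \<Sum>j\<in>A. f j x) \<in> V"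
    using lin_closed_sum[OF assms(1,3) insert.hyps(1)] insert.prems by simp
  then show ?case
    using lin_onD[OF assms(2), of "f i" "\<lambda>x. \<Sum>j\<in>A. f j x" 1 1] insert by simp
qed (use lin_on_zero[OF assms(2,3)] in simp)

lemma lin_on_inv_into:
  assumes "lin_closed V" and "lin_on V T" and "bij_betw T V W"
  shows "lin_on W (inv_into V T)"
  unfolding lin_on_def
proof (intro ballI allI)
  fix u v a b assume "u \<in> W" "v \<in> W"
  let ?u = "inv_into V T u" and ?v = "inv_into V T v"
  have uv: "?u \<in> V" "?v \<in> V" "T ?u = u" "T ?v = v"
    using assms(3) \<open>u \<in> W\<close> \<open>v \<in> W\<close> by (auto simp: bij_betw_def inv_into_into f_inv_into_f)
  have "T (\<lambda>y. a * ?u y + b * ?v y) = (\<lambda>x. a * u x + b * v x)"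
    using lin_onD[OF assms(2) uv(1,2)] uv(3,4) by simp
  then show "inv_into V T (\<lambda>x. a * u x + b * v x) = (\<lambda>y. a * ?u y + b * ?v y)"
    using bij_betw_inv_into_left[OF assms(3) lin_closedD[OF assms(1) uv(1,2), of a b]] by simp
qed

lemma rep_iso_iff:
  "rep_iso G V1 \<rho>1 V2 \<rho>2 \<longleftrightarrow>
     (\<exists>T. bij_betw T V1 V2 \<and> lin_on V1 T \<and> (\<forall>g\<in>carrier G. \<forall>v\<in>V1. T (\<rho>1 g v) = \<rho>2 g (T v)))"
  by (simp add: rep_iso_def lin_on_def)

lemma rep_iso_sym:
  assumes "rep_iso G V1 \<rho>1 V2 \<rho>2" and "lin_closed V1"
    and "\<And>g v. g \<in> carrier G \<Longrightarrow> v \<in> V1 \<Longrightarrow> \<rho>1 g v \<in> V1"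
  shows "rep_iso G V2 \<rho>2 V1 \<rho>1"
proof -
  obtain T where bij: "bij_betw T V1 V2" and lin: "lin_on V1 T"
    and eqv: "\<forall>g\<in>carrier G. \<forall>v\<in>V1. T (\<rho>1 g v) = \<rho>2 g (T v)"
    using assms(1) unfolding rep_iso_iff by blast
  have "inv_into V1 T (\<rho>2 g w) = \<rho>1 g (inv_into V1 T w)" if "g \<in> carrier G" "w \<in> V2" for g w
  proof -
    have w: "inv_into V1 T w \<in> V1" "T (inv_into V1 T w) = w"
      using bij \<open>w \<in> V2\<close> by (auto simp: bij_betw_def inv_into_into f_inv_into_f)
    then have "T (\<rho>1 g (inv_into V1 T w)) = \<rho>2 g w"
      using eqv that by simp
    then show ?thesis
      using bij_betw_inv_into_left[OF bij assms(3)[OF \<open>g \<in> carrier G\<close> w(1)]] by simp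
  qed
  then show ?thesis
    unfolding rep_iso_iff using bij_betw_inv_into[OF bij] lin_on_inv_into[OF assms(2) lin bij] by blast
qed

section \<open>Monomial structures under isomorphisms\<close>

lemma ex1_bij_betw_transfer:
  assumes "bij_betw \<Phi> A B" and "\<And>a. a \<in> A \<Longrightarrow> Q (\<Phi> a) \<longleftrightarrow> P a"
    and "\<exists>!a. a \<in> A \<and> P a"
  shows "\<exists>!b. b \<in> B \<and> Q b"
proof -
  obtain a where a: "a \<in> A" "P a" and uniq: "\<And>a'. a' \<in> A \<Longrightarrow> P a' \<Longrightarrow> a' = a"
    using assms(3) by blast
  show ?thesis
  proof (rule ex1I[of _ "\<Phi> a"])
    show "\<Phi> a \<in> B \<and> Q (\<Phi> a)" using a assms(2) bij_betwE[OF assms(1)] by blast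
  next
    fix b assume "b \<in> B \<and> Q b"
    then obtain a' where "a' \<in> A" "b = \<Phi> a'"
      using assms(1) by (auto simp: bij_betw_def)
    moreover have "P a'" using \<open>b \<in> B \<and> Q b\<close> calculation assms(2) by simp
    ultimately show "b = \<Phi> a" using uniq by simp
  qed
qed

lemma lin_on_image_line:
  assumes "lin_on V T" and "v \<in> V"
  shows "T ` {(\<lambda>x. c * v x) | c. True} = {(\<lambda>y. c * T v y) | c. True}"
proof -
  have "T ` {(\<lambda>x. c * v x) | c. True} = (\<lambda>c. T (\<lambda>x. c * v x)) ` UNIV" by auto
  also have "\<dots> = {(\<lambda>y. c * T v y) | c. True}" using lin_on_smult[OF assms] by auto
  finally show ?thesis .
qed

lemma monomial_structure_lineD:
  "monomial_structure G V \<rho> \<L> \<Longrightarrow> L \<in> \<L> \<Longrightarrow> \<exists>v\<in>V. v \<noteq> (\<lambda>x. 0) \<and> L = {(\<lambda>x. c * v x) | c. True}"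
  unfolding monomial_structure_def by (elim conjE) (erule bspec)

lemma monomial_structure_permD:
  assumes "monomial_structure G V \<rho> \<L>" and "g \<in> carrier G" and "L \<in> \<L>"
  shows "\<rho> g ` L \<in> \<L>"
  using assms(1)[unfolded monomial_structure_def, THEN conjunct2, THEN conjunct2, THEN conjunct2] assms(2,3)
  by blast

lemma monomial_structure_line_subset:
  assumes "monomial_structure G V \<rho> \<L>" and "lin_closed V" and "L \<in> \<L>"
  shows "L \<subseteq> V"
  using monomial_structure_lineD[OF assms(1,3)] lin_closed_smult[OF assms(2)] by auto

definition image_section :: "('a \<Rightarrow> 'b) \<Rightarrow> 'a set set \<Rightarrow> ('a set \<Rightarrow> 'a) \<Rightarrow> 'b set \<Rightarrow> 'b" where
  "image_section T \<L> c = (\<lambda>L'\<in>(`) T ` \<L>. T (c (inv_into \<L> ((`) T) L')))"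

lemma inj_on_image_subsets:
  assumes "inj_on T V" and "\<And>L. L \<in> \<L> \<Longrightarrow> L \<subseteq> V"
  shows "inj_on ((`) T) \<L>"
  by (rule inj_on_image, rule inj_on_subset[OF assms(1)]) (use assms(2) in blast)

lemma image_section_image:
  assumes "inj_on T V" and "\<And>L. L \<in> \<L> \<Longrightarrow> L \<subseteq> V" and "L \<in> \<L>"
  shows "image_section T \<L> c (T ` L) = T (c L)"
  using assms(3) inj_on_image_subsets[OF assms(1,2)] by (simp add: image_section_def)

lemma bij_betw_image_section:
  assumes inj: "inj_on T V" and sub: "\<And>L. L \<in> \<L> \<Longrightarrow> L \<subseteq> V"
  shows "bij_betw (image_section T \<L>) (\<Pi>\<^sub>E L\<in>\<L>. L) (\<Pi>\<^sub>E L'\<in>(`) T ` \<L>. L')"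
proof (rule bij_betw_byWitness[of _ "\<lambda>d. \<lambda>L\<in>\<L>. inv_into V T (d (T ` L))"])
  let ?\<L>' = "(`) T ` \<L>"
  note image_section_image[OF inj sub, simp]
  show "\<forall>c\<in>\<Pi>\<^sub>E L\<in>\<L>. L. (\<lambda>L\<in>\<L>. inv_into V T (image_section T \<L> c (T ` L))) = c"
  proof
    fix c assume c: "c \<in> (\<Pi>\<^sub>E L\<in>\<L>. L)"
    have "inv_into V T (T (c L)) = c L" if "L \<in> \<L>" for L
      using c that sub inv_into_f_f[OF inj] by blast
    then show "(\<lambda>L\<in>\<L>. inv_into V T (image_section T \<L> c (T ` L))) = c"
      using c by (auto simp: PiE_def intro: extensionalityI)
  qed
  show "\<forall>d\<in>\<Pi>\<^sub>E L'\<in>?\<L>'. L'. image_section T \<L> (\<lambda>L\<in>\<L>. inv_into V T (d (T ` L))) = d"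
  proof
    fix d assume d: "d \<in> (\<Pi>\<^sub>E L'\<in>?\<L>'. L')"
    have "T (inv_into V T (d (T ` L))) = d (T ` L)" if "L \<in> \<L>" for L
    proof -
      have "d (T ` L) \<in> T ` L" using d that by auto
      then show ?thesis using sub[OF that] by (blast intro: f_inv_into_f)
    qed
    then show "image_section T \<L> (\<lambda>L\<in>\<L>. inv_into V T (d (T ` L))) = d"
    proof (intro extensionalityI[of _ ?\<L>'])
      show "image_section T \<L> (\<lambda>L\<in>\<L>. inv_into V T (d (T ` L))) \<in> extensional ?\<L>'"
        by (simp add: image_section_def)
      show "d \<in> extensional ?\<L>'" using d by (simp add: PiE_def)
    qed auto
  qed
  show "image_section T \<L> ` (\<Pi>\<^sub>E L\<in>\<L>. L) \<subseteq> (\<Pi>\<^sub>E L'\<in>?\<L>'. L')"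
    by (auto simp: image_section_def[of T \<L>] inv_into_f_f[OF inj_on_image_subsets[OF inj sub]])
  show "(\<lambda>d. \<lambda>L\<in>\<L>. inv_into V T (d (T ` L))) ` (\<Pi>\<^sub>E L'\<in>?\<L>'. L') \<subseteq> (\<Pi>\<^sub>E L\<in>\<L>. L)"
  proof -
    have "inv_into V T (d (T ` L)) \<in> L" if "d \<in> (\<Pi>\<^sub>E L'\<in>?\<L>'. L')" "L \<in> \<L>" for d L
    proof -
      have "d (T ` L) \<in> T ` L" using that by auto
      then obtain u where "u \<in> L" "d (T ` L) = T u" by blast
      moreover have "u \<in> V" using \<open>u \<in> L\<close> sub[OF that(2)] by blast
      ultimately show ?thesis by (simp add: inv_into_f_f[OF inj])
    qed
    then show ?thesis by auto
  qed
qed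

lemma direct_sum_image:
  fixes T :: "('x \<Rightarrow> complex) \<Rightarrow> ('y \<Rightarrow> complex)"
  assumes cl: "lin_closed V" and lin: "lin_on V T" and bij: "bij_betw T V W"
    and fin: "finite \<L>" and sub: "\<And>L. L \<in> \<L> \<Longrightarrow> L \<subseteq> V"
    and ds: "\<forall>v\<in>V. \<exists>!c. c \<in> (\<Pi>\<^sub>E L\<in>\<L>. L) \<and> v = (\<lambda>x. \<Sum>L\<in>\<L>. c L x)"
  shows "\<forall>w\<in>W. \<exists>!d. d \<in> (\<Pi>\<^sub>E L'\<in>(`) T ` \<L>. L') \<and> w = (\<lambda>y. \<Sum>L'\<in>(`) T ` \<L>. d L' y)"
proof
  fix w assume "w \<in> W"
  then obtain v where v: "v \<in> V" "w = T v" using bij by (auto simp: bij_betw_def)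
  have inj: "inj_on T V" using bij by (auto simp: bij_betw_def)
  have zero: "(\<lambda>x. 0) \<in> V" using lin_closed_zero[OF cl v(1)] .
  have sum_eq_iff:
    "w = (\<lambda>y. \<Sum>L'\<in>(`) T ` \<L>. image_section T \<L> c L' y) \<longleftrightarrow> v = (\<lambda>x. \<Sum>L\<in>\<L>. c L x)"
    if c: "c \<in> (\<Pi>\<^sub>E L\<in>\<L>. L)" for c
  proof -
    have cV: "\<forall>L\<in>\<L>. c L \<in> V" using c sub by (auto simp: PiE_iff)
    have "(\<lambda>y. \<Sum>L'\<in>(`) T ` \<L>. image_section T \<L> c L' y) = (\<lambda>y. \<Sum>L\<in>\<L>. T (c L) y)"
      by (simp add: sum.reindex[OF inj_on_image_subsets[OF inj sub]] image_section_image[OF inj sub])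
    also have "\<dots> = T (\<lambda>x. \<Sum>L\<in>\<L>. c L x)"
      using lin_on_sum[OF cl lin zero fin cV] by simp
    finally show ?thesis
      using v inj_on_eq_iff[OF inj v(1) lin_closed_sum[OF cl zero fin cV]] by simp
  qed
  show "\<exists>!d. d \<in> (\<Pi>\<^sub>E L'\<in>(`) T ` \<L>. L') \<and> w = (\<lambda>y. \<Sum>L'\<in>(`) T ` \<L>. d L' y)"
  proof (rule ex1_bij_betw_transfer[OF bij_betw_image_section[OF inj sub]])
    show "\<exists>!c. c \<in> (\<Pi>\<^sub>E L\<in>\<L>. L) \<and> v = (\<lambda>x. \<Sum>L\<in>\<L>. c L x)"
      using ds v(1) by (rule bspec)
  qed (auto simp: sum_eq_iff)
qed

lemma monomial_structure_image:
  assumes ms: "monomial_structure G V \<rho> \<L>" and cl: "lin_closed V"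
    and bij: "bij_betw T V W" and lin: "lin_on V T"
    and eqv: "\<And>g v. g \<in> carrier G \<Longrightarrow> v \<in> V \<Longrightarrow> T (\<rho> g v) = \<sigma> g (T v)"
  shows "monomial_structure G W \<sigma> ((`) T ` \<L>)"
proof -
  have inj: "inj_on T V" and img: "T ` V = W" using bij by (auto simp: bij_betw_def)
  have sub: "L \<subseteq> V" if "L \<in> \<L>" for L
    using monomial_structure_line_subset[OF ms cl that] .
  have lines: "\<exists>w\<in>W. w \<noteq> (\<lambda>x. 0) \<and> T ` L = {(\<lambda>x. c * w x) | c. True}" if L: "L \<in> \<L>" for L
  proof -
    obtain v where v: "v \<in> V" "v \<noteq> (\<lambda>x. 0)" and Lv: "L = {(\<lambda>x. c * v x) | c. True}"
      using monomial_structure_lineD[OF ms L] by blast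
    have "T v \<noteq> T (\<lambda>x. 0)"
      using inj_on_eq_iff[OF inj v(1) lin_closed_zero[OF cl v(1)]] v(2) by simp
    then have "T v \<noteq> (\<lambda>x. 0)" using lin_on_zero[OF lin v(1)] by simp
    then show ?thesis using v(1) img lin_on_image_line[OF lin v(1)] Lv by blast
  qed
  have perm: "\<sigma> g ` T ` L \<in> (`) T ` \<L>" if "g \<in> carrier G" "L \<in> \<L>" for g L
  proof -
    have "\<sigma> g ` T ` L = T ` \<rho> g ` L"
      using eqv[OF that(1)] sub[OF that(2)] by (force simp: image_image)
    moreover have "\<rho> g ` L \<in> \<L>" using monomial_structure_permD[OF ms that] .
    ultimately show ?thesis by simp
  qed
  have fin: "finite \<L>"
    and ds: "\<forall>v\<in>V. \<exists>!c. c \<in> (\<Pi>\<^sub>E L\<in>\<L>. L) \<and> v = (\<lambda>x. \<Sum>L\<in>\<L>. c L x)"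
    using ms unfolding monomial_structure_def by simp_all
  show ?thesis
    unfolding monomial_structure_def
    using fin direct_sum_image[OF cl lin bij fin sub ds] lines perm by simp
qed

lemma stabilizer_image_equivariant:
  assumes "inj_on S V" and "L \<subseteq> V"
    and "\<And>g v. g \<in> carrier G \<Longrightarrow> v \<in> V \<Longrightarrow> \<rho> g v \<in> V"
    and "\<And>g v. g \<in> carrier G \<Longrightarrow> v \<in> V \<Longrightarrow> S (\<rho> g v) = \<sigma> g (S v)"
  shows "stabilizer G (\<lambda>g. image (\<sigma> g)) (S ` L) = stabilizer G (\<lambda>g. image (\<rho> g)) L"
proof -
  have "\<sigma> g ` S ` L = S ` L \<longleftrightarrow> \<rho> g ` L = L" if "g \<in> carrier G" for g
  proof -
    have "\<sigma> g ` S ` L = S ` \<rho> g ` L"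
      using assms(2,4) that by (force simp: image_image)
    moreover have "\<rho> g ` L \<subseteq> V" using assms(2,3) that by blast
    ultimately show ?thesis using inj_on_image_eq_iff[OF assms(1) _ assms(2)] by simp
  qed
  then show ?thesis unfolding stabilizer_def by blast
qed

lemma monomial_iso_stabilizer:
  assumes "monomial_iso G \<rho> \<L>1 \<L>2" and "monomial_structure G V \<rho> \<L>1" and "L \<in> \<L>1"
  obtains L' where "L' \<in> \<L>2"
    and "stabilizer G (\<lambda>g. image (\<rho> g)) L' = stabilizer G (\<lambda>g. image (\<rho> g)) L"
proof -
  obtain \<phi> where bij: "bij_betw \<phi> \<L>1 \<L>2"
    and eqv: "\<forall>g\<in>carrier G. \<forall>L\<in>\<L>1. \<phi> (\<rho> g ` L) = \<rho> g ` \<phi> L"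
    using assms(1) unfolding monomial_iso_def by blast
  have "\<rho> g ` \<phi> L = \<phi> L \<longleftrightarrow> \<rho> g ` L = L" if "g \<in> carrier G" for g
  proof -
    have "\<rho> g ` \<phi> L = \<phi> L \<longleftrightarrow> \<phi> (\<rho> g ` L) = \<phi> L" using eqv that assms(3) by simp
    also have "\<dots> \<longleftrightarrow> \<rho> g ` L = L"
      using inj_on_eq_iff[OF bij_betw_imp_inj_on[OF bij] monomial_structure_permD[OF assms(2) that assms(3)] assms(3)] .
    finally show ?thesis .
  qed
  then show ?thesis
    using that[of "\<phi> L"] bij_betwE[OF bij] assms(3) unfolding stabilizer_def by blast
qed

section \<open>Conjugate subgroups and characters\<close>

lemma (in group) inv_mult_cancel_left [simp]:
  "x \<in> carrier G \<Longrightarrow> y \<in> carrier G \<Longrightarrow> inv x \<otimes> (x \<otimes> y) = y"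
  by (simp add: m_assoc[symmetric])

lemma (in group) mult_inv_cancel_left [simp]:
  "x \<in> carrier G \<Longrightarrow> y \<in> carrier G \<Longrightarrow> x \<otimes> (inv x \<otimes> y) = y"
  by (simp add: m_assoc[symmetric])

lemma (in group) conj_image_mem_iff:
  assumes "H \<subseteq> carrier G" and "g \<in> carrier G" and "y \<in> carrier G"
  shows "g \<in> (\<lambda>h. inv y \<otimes> h \<otimes> y) ` H \<longleftrightarrow> y \<otimes> g \<otimes> inv y \<in> H"
proof
  assume "g \<in> (\<lambda>h. inv y \<otimes> h \<otimes> y) ` H"
  then show "y \<otimes> g \<otimes> inv y \<in> H" using assms by (auto simp: m_assoc)
next
  assume "y \<otimes> g \<otimes> inv y \<in> H"
  moreover have "g = inv y \<otimes> (y \<otimes> g \<otimes> inv y) \<otimes> y" using assms(2,3) by (simp add: m_assoc)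
  ultimately show "g \<in> (\<lambda>h. inv y \<otimes> h \<otimes> y) ` H" by blast
qed

lemma (in group) conj_image_conj_image:
  assumes "H \<subseteq> carrier G" and "y \<in> carrier G"
  shows "(\<lambda>k. y \<otimes> k \<otimes> inv y) ` (\<lambda>h. inv y \<otimes> h \<otimes> y) ` H = H"
proof -
  have "y \<otimes> (inv y \<otimes> h \<otimes> y) \<otimes> inv y = h" if "h \<in> H" for h
    using assms that by (auto simp: m_assoc)
  then show ?thesis by (simp add: image_image)
qed

lemma (in group) lin_char_conj:
  assumes "subgroup H G" and "lin_char G H \<xi>" and "g \<in> carrier G"
  shows "lin_char G ((\<lambda>h. inv g \<otimes> h \<otimes> g) ` H) (\<lambda>k. \<xi> (g \<otimes> k \<otimes> inv g))"
proof -
  have HG: "h \<in> carrier G" if "h \<in> H" for h using subgroup.mem_carrier[OF assms(1) that] .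
  have unconj: "g \<otimes> (inv g \<otimes> h \<otimes> g) \<otimes> inv g = h" if "h \<in> H" for h
    using HG[OF that] assms(3) by (simp add: m_assoc)
  have mult: "inv g \<otimes> h \<otimes> g \<otimes> (inv g \<otimes> h' \<otimes> g) = inv g \<otimes> (h \<otimes> h') \<otimes> g"
    if "h \<in> H" "h' \<in> H" for h h'
    using HG that assms(3) by (simp add: m_assoc)
  show ?thesis
    using assms(2) subgroup.m_closed[OF assms(1)] unfolding lin_char_def
    by (auto simp: unconj mult)
qed

definition left_translate :: "('g, 'b) monoid_scheme \<Rightarrow> 'g \<Rightarrow> ('g \<Rightarrow> complex) \<Rightarrow> 'g \<Rightarrow> complex" where
  "left_translate G a f = (\<lambda>x. if x \<in> carrier G then f (a \<otimes>\<^bsub>G\<^esub> x) else 0)"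

lemma (in group) left_translate_ind_space:
  assumes "subgroup H G" and "a \<in> carrier G" and f: "f \<in> ind_space G H \<xi>"
  shows "left_translate G a f \<in> ind_space G ((\<lambda>h. inv a \<otimes> h \<otimes> a) ` H) (\<lambda>k. \<xi> (a \<otimes> k \<otimes> inv a))"
proof -
  have HG: "h \<in> carrier G" if "h \<in> H" for h using subgroup.mem_carrier[OF assms(1) that] .
  have "f (a \<otimes> (inv a \<otimes> h \<otimes> a \<otimes> x)) = \<xi> h * f (a \<otimes> x)" if "h \<in> H" "x \<in> carrier G" for h x
    using f that assms(2) HG[OF that(1)] unfolding ind_space_def by (simp add: m_assoc)
  then show ?thesis
    using assms(2) HG unfolding ind_space_def left_translate_def by (auto simp: m_assoc)
qed

lemma (in group) left_translate_inv_ind_space: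
  assumes "subgroup H G" and "a \<in> carrier G"
    and f: "f \<in> ind_space G ((\<lambda>h. inv a \<otimes> h \<otimes> a) ` H) (\<lambda>k. \<xi> (a \<otimes> k \<otimes> inv a))"
  shows "left_translate G (inv a) f \<in> ind_space G H \<xi>"
proof -
  have HG: "h \<in> carrier G" if "h \<in> H" for h using subgroup.mem_carrier[OF assms(1) that] .
  have "f (inv a \<otimes> (h \<otimes> x)) = \<xi> h * f (inv a \<otimes> x)" if "h \<in> H" "x \<in> carrier G" for h x
  proof -
    have "inv a \<otimes> (h \<otimes> x) = (inv a \<otimes> h \<otimes> a) \<otimes> (inv a \<otimes> x)"
      using that assms(2) HG[OF that(1)] by (simp add: m_assoc)
    moreover have "a \<otimes> (inv a \<otimes> h \<otimes> a) \<otimes> inv a = h"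
      using assms(2) HG[OF that(1)] by (simp add: m_assoc)
    ultimately show ?thesis
      using f that assms(2) HG[OF that(1)] unfolding ind_space_def by auto
  qed
  then show ?thesis
    using assms(2) HG unfolding ind_space_def left_translate_def by auto
qed

lemma (in group) left_translate_inv:
  assumes "a \<in> carrier G" and "\<forall>x. x \<notin> carrier G \<longrightarrow> f x = 0"
  shows "left_translate G (inv a) (left_translate G a f) = f"
    and "left_translate G a (left_translate G (inv a) f) = f"
  using assms by (auto simp: left_translate_def fun_eq_iff m_assoc[symmetric])

lemma (in group) rep_iso_ind_space_conj:
  assumes "subgroup H G" and "g \<in> carrier G"
  shows "rep_iso G (ind_space G H \<xi>) (ind_act G)
           (ind_space G ((\<lambda>h. inv g \<otimes> h \<otimes> g) ` H) (\<lambda>k. \<xi> (g \<otimes> k \<otimes> inv g))) (ind_act G)"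
proof -
  let ?V = "ind_space G H \<xi>"
  let ?W = "ind_space G ((\<lambda>h. inv g \<otimes> h \<otimes> g) ` H) (\<lambda>k. \<xi> (g \<otimes> k \<otimes> inv g))"
  have "bij_betw (left_translate G g) ?V ?W"
  proof (rule bij_betw_byWitness[of _ "left_translate G (inv g)"])
    show "\<forall>f\<in>?V. left_translate G (inv g) (left_translate G g f) = f"
      using left_translate_inv(1)[OF assms(2)] unfolding ind_space_def by blast
    show "\<forall>f\<in>?W. left_translate G g (left_translate G (inv g) f) = f"
      using left_translate_inv(2)[OF assms(2)] unfolding ind_space_def by blast
    show "left_translate G g ` ?V \<subseteq> ?W"
      using left_translate_ind_space[OF assms] by blast
    show "left_translate G (inv g) ` ?W \<subseteq> ?V"
      using left_translate_inv_ind_space[OF assms] by blast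
  qed
  moreover have "lin_on ?V (left_translate G g)"
    by (auto simp: lin_on_def left_translate_def)
  moreover have "left_translate G g (ind_act G k f) = ind_act G k (left_translate G g f)"
    if "k \<in> carrier G" for k f
    using that assms(2) by (auto simp: left_translate_def ind_act_def m_assoc)
  ultimately show ?thesis unfolding rep_iso_iff by blast
qed

section \<open>The standard monomial structure of an induced representation\<close>

locale induced_rep = group G for G :: "('g, 'b) monoid_scheme" (structure) +
  fixes H :: "'g set" and \<chi> :: "'g \<Rightarrow> complex"
  assumes subgroup_H: "subgroup H G" and lin_char_\<chi>: "lin_char G H \<chi>"
begin

abbreviation V :: "('g \<Rightarrow> complex) set" where "V \<equiv> ind_space G H \<chi>"

abbreviation \<rho> :: "'g \<Rightarrow> ('g \<Rightarrow> complex) \<Rightarrow> ('g \<Rightarrow> complex)" where "\<rho> \<equiv> ind_act G"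

lemma H_subset: "H \<subseteq> carrier G"
  using subgroup.subset[OF subgroup_H] .

lemma \<chi>_mult: "h \<in> H \<Longrightarrow> k \<in> H \<Longrightarrow> \<chi> (h \<otimes> k) = \<chi> h * \<chi> k"
  using lin_char_\<chi> unfolding lin_char_def by blast

lemma \<chi>_one: "\<chi> \<one> = 1"
proof -
  have "\<one> \<in> H" "\<chi> \<one> \<noteq> 0" using subgroup.one_closed[OF subgroup_H] lin_char_\<chi>
    by (auto simp: lin_char_def)
  then show ?thesis using \<chi>_mult[of \<one> \<one>] by simp
qed

lemma ind_space_outside: "f \<in> V \<Longrightarrow> x \<notin> carrier G \<Longrightarrow> f x = 0"
  unfolding ind_space_def by blast

lemma ind_space_mult: "f \<in> V \<Longrightarrow> h \<in> H \<Longrightarrow> x \<in> carrier G \<Longrightarrow> f (h \<otimes> x) = \<chi> h * f x"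
  unfolding ind_space_def by blast

lemma lin_closed_ind_space: "lin_closed V"
  unfolding lin_closed_def ind_space_def by (auto simp: algebra_simps)

lemma ind_act_closed: "g \<in> carrier G \<Longrightarrow> f \<in> V \<Longrightarrow> \<rho> g f \<in> V"
  unfolding ind_space_def ind_act_def using H_subset by (auto simp: m_assoc)

lemma ind_act_inv: "g \<in> carrier G \<Longrightarrow> f \<in> V \<Longrightarrow> \<rho> g (\<rho> (inv g) f) = f"
  unfolding ind_act_def using ind_space_outside by (auto simp: m_assoc fun_eq_iff)

lemma mem_rcos_iff: "y \<in> carrier G \<Longrightarrow> x \<in> H #> y \<longleftrightarrow> x \<in> carrier G \<and> x \<otimes> inv y \<in> H"
  using subgroup.rcos_module[OF subgroup_H is_group] r_coset_subset_G[OF H_subset] by blast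

lemma rcos_eq_iff: "a \<in> carrier G \<Longrightarrow> y \<in> carrier G \<Longrightarrow> H #> a = H #> y \<longleftrightarrow> a \<in> H #> y"
  using repr_independence[OF _ _ subgroup_H] rcos_self[OF _ subgroup_H] by metis

lemma rcos_mult_left_iff:
  assumes "h \<in> H" and "x \<in> carrier G" and "y \<in> carrier G"
  shows "h \<otimes> x \<in> H #> y \<longleftrightarrow> x \<in> H #> y"
proof -
  have hG: "h \<in> carrier G" using assms(1) H_subset by blast
  have "h \<otimes> x \<otimes> inv y \<in> H \<longleftrightarrow> x \<otimes> inv y \<in> H"
    using subgroup.m_closed[OF subgroup_H] subgroup.m_inv_closed[OF subgroup_H] assms hG
    by (metis inv_closed inv_mult_cancel_left m_assoc m_closed)
  then show ?thesis using assms hG by (simp add: mem_rcos_iff)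
qed

definition coset_fun :: "'g \<Rightarrow> 'g \<Rightarrow> complex" where
  "coset_fun y = (\<lambda>x. if x \<in> H #> y then \<chi> (x \<otimes> inv y) else 0)"

definition coset_line :: "'g \<Rightarrow> ('g \<Rightarrow> complex) set" where
  "coset_line y = {f \<in> V. \<forall>x. x \<notin> H #> y \<longrightarrow> f x = 0}"

definition coset_lines :: "('g \<Rightarrow> complex) set set" where
  "coset_lines = coset_line ` carrier G"

lemma coset_fun_ind_space:
  assumes "y \<in> carrier G"
  shows "coset_fun y \<in> V"
proof -
  have "coset_fun y (h \<otimes> x) = \<chi> h * coset_fun y x" if "h \<in> H" "x \<in> carrier G" for h x
  proof (cases "x \<in> H #> y")
    case True
    have "h \<otimes> x \<otimes> inv y = h \<otimes> (x \<otimes> inv y)" using that H_subset assms by (auto simp: m_assoc)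
    moreover have "h \<otimes> x \<in> H #> y" using True rcos_mult_left_iff that assms by simp
    moreover have "x \<otimes> inv y \<in> H" using True assms mem_rcos_iff by blast
    ultimately show ?thesis using True \<chi>_mult[OF that(1)] by (simp add: coset_fun_def)
  qed (use that assms rcos_mult_left_iff in \<open>simp add: coset_fun_def\<close>)
  moreover have "coset_fun y x = 0" if "x \<notin> carrier G" for x
    using that assms by (simp add: coset_fun_def mem_rcos_iff)
  ultimately show ?thesis unfolding ind_space_def by blast
qed

lemma coset_fun_self: "y \<in> carrier G \<Longrightarrow> coset_fun y y = 1"
  using rcos_self[OF _ subgroup_H] \<chi>_one by (simp add: coset_fun_def)

lemma coset_line_eq_span:
  assumes "y \<in> carrier G"
  shows "coset_line y = {(\<lambda>x. c * coset_fun y x) | c. True}"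
proof
  show "coset_line y \<subseteq> {(\<lambda>x. c * coset_fun y x) | c. True}"
  proof
    fix f assume f: "f \<in> coset_line y"
    have "f x = f y * coset_fun y x" for x
    proof (cases "x \<in> H #> y")
      case True
      then have "x \<otimes> inv y \<in> H" "x \<in> carrier G" using assms mem_rcos_iff by auto
      moreover have "f x = f (x \<otimes> inv y \<otimes> y)" using calculation assms by (simp add: m_assoc)
      ultimately have "f x = \<chi> (x \<otimes> inv y) * f y"
        using f assms ind_space_mult[of f "x \<otimes> inv y" y] by (simp add: coset_line_def)
      then show ?thesis using True by (simp add: coset_fun_def)
    qed (use f in \<open>simp add: coset_line_def coset_fun_def\<close>)
    then show "f \<in> {(\<lambda>x. c * coset_fun y x) | c. True}" by blast
  qed
  show "{(\<lambda>x. c * coset_fun y x) | c. True} \<subseteq> coset_line y"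
    using lin_closed_smult[OF lin_closed_ind_space coset_fun_ind_space[OF assms]]
    by (auto simp: coset_line_def coset_fun_def)
qed

lemma coset_line_subset: "coset_line y \<subseteq> V"
  unfolding coset_line_def by blast

lemma coset_line_eq_iff:
  assumes "a \<in> carrier G" and "b \<in> carrier G"
  shows "coset_line a = coset_line b \<longleftrightarrow> H #> a = H #> b"
proof
  assume "coset_line a = coset_line b"
  then have "coset_fun a \<in> coset_line b" using coset_line_eq_span[OF assms(1)] by force
  then have "a \<in> H #> b" using coset_fun_self[OF assms(1)] unfolding coset_line_def by force
  then show "H #> a = H #> b" using rcos_eq_iff assms by blast
qed (simp add: coset_line_def)

lemma ind_act_coset_line_subset:
  assumes "g \<in> carrier G" and "y \<in> carrier G"
  shows "\<rho> g ` coset_line y \<subseteq> coset_line (y \<otimes> inv g)"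
proof
  fix f' assume "f' \<in> \<rho> g ` coset_line y"
  then obtain f where f: "f \<in> coset_line y" and f': "f' = \<rho> g f" by blast
  have "f' x = 0" if "x \<notin> H #> (y \<otimes> inv g)" for x
  proof (cases "x \<in> carrier G")
    case True
    have "x \<otimes> g \<otimes> inv y = x \<otimes> inv (y \<otimes> inv g)"
      using True assms by (simp add: inv_mult_group m_assoc)
    then have "x \<otimes> g \<notin> H #> y" using that True assms by (simp add: mem_rcos_iff)
    then show ?thesis using f f' True by (simp add: coset_line_def ind_act_def)
  qed (simp add: f' ind_act_def)
  moreover have "f' \<in> V" using ind_act_closed[OF assms(1)] f f' coset_line_subset by blast
  ultimately show "f' \<in> coset_line (y \<otimes> inv g)" unfolding coset_line_def by blast
qed

lemma ind_act_coset_line: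
  assumes "g \<in> carrier G" and "y \<in> carrier G"
  shows "\<rho> g ` coset_line y = coset_line (y \<otimes> inv g)"
proof
  show "coset_line (y \<otimes> inv g) \<subseteq> \<rho> g ` coset_line y"
  proof
    fix f assume f: "f \<in> coset_line (y \<otimes> inv g)"
    have "\<rho> (inv g) f \<in> coset_line y"
      using ind_act_coset_line_subset[of "inv g" "y \<otimes> inv g"] f assms by (auto simp: m_assoc)
    moreover have "f = \<rho> g (\<rho> (inv g) f)"
      using ind_act_inv[OF assms(1)] f coset_line_subset by (simp add: subset_iff)
    ultimately show "f \<in> \<rho> g ` coset_line y" by blast
  qed
qed (rule ind_act_coset_line_subset[OF assms])

lemma stabilizer_coset_line:
  assumes "y \<in> carrier G"
  shows "stabilizer G (\<lambda>g. image (\<rho> g)) (coset_line y) = (\<lambda>h. inv y \<otimes> h \<otimes> y) ` H"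
proof -
  have "\<rho> g ` coset_line y = coset_line y \<longleftrightarrow> g \<in> (\<lambda>h. inv y \<otimes> h \<otimes> y) ` H"
    if g: "g \<in> carrier G" for g
  proof -
    have "\<rho> g ` coset_line y = coset_line y \<longleftrightarrow> y \<otimes> inv g \<in> H #> y"
      using ind_act_coset_line coset_line_eq_iff rcos_eq_iff assms g by simp
    also have "\<dots> \<longleftrightarrow> inv (y \<otimes> inv g \<otimes> inv y) \<in> H"
      using mem_rcos_iff assms g subgroup.m_inv_closed[OF subgroup_H] by (metis inv_closed inv_inv m_closed)
    also have "\<dots> \<longleftrightarrow> g \<in> (\<lambda>h. inv y \<otimes> h \<otimes> y) ` H"
      using conj_image_mem_iff[OF H_subset g assms] assms g by (simp add: inv_mult_group m_assoc)
    finally show ?thesis .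
  qed
  moreover have "(\<lambda>h. inv y \<otimes> h \<otimes> y) ` H \<subseteq> carrier G" using H_subset assms by auto
  ultimately show ?thesis unfolding stabilizer_def by blast
qed

lemma coset_line_mult_left:
  assumes "h \<in> H" and "x \<in> carrier G"
  shows "coset_line (h \<otimes> x) = coset_line x"
proof -
  have hx: "h \<otimes> x \<in> carrier G" using assms H_subset by blast
  have "h \<otimes> x \<in> H #> x" using rcos_mult_left_iff[OF assms assms(2)] rcos_self[OF assms(2) subgroup_H] by simp
  then show ?thesis using coset_line_eq_iff[OF hx assms(2)] rcos_eq_iff[OF hx assms(2)] by simp
qed

lemma coset_line_vanishes:
  assumes "x \<in> carrier G" and "L \<in> coset_lines" and "L \<noteq> coset_line x" and "f \<in> L"
  shows "f x = 0"
proof -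
  obtain y where y: "y \<in> carrier G" and L: "L = coset_line y"
    using assms(2) unfolding coset_lines_def by blast
  have "x \<notin> H #> y"
  proof
    assume "x \<in> H #> y"
    then have "coset_line x = coset_line y"
      using coset_line_eq_iff[OF assms(1) y] rcos_eq_iff[OF assms(1) y] by simp
    then show False using assms(3) L by simp
  qed
  then show ?thesis using assms(4) L unfolding coset_line_def by blast
qed

text \<open>The component of \<open>v\<close> on a coset line \<open>L\<close>; the coset is recognised through
  \<open>coset_line x = L\<close>, so no representative has to be chosen.\<close>

definition line_component :: "('g \<Rightarrow> complex) \<Rightarrow> ('g \<Rightarrow> complex) set \<Rightarrow> 'g \<Rightarrow> complex" where
  "line_component v L = (\<lambda>x. if x \<in> carrier G \<and> L = coset_line x then v x else 0)"

lemma line_component_mem: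
  assumes "v \<in> V" and "y \<in> carrier G"
  shows "line_component v (coset_line y) \<in> coset_line y"
proof -
  have "line_component v (coset_line y) (h \<otimes> x) = \<chi> h * line_component v (coset_line y) x"
    if "h \<in> H" "x \<in> carrier G" for h x
    using that assms(1) ind_space_mult coset_line_mult_left H_subset
    by (auto simp: line_component_def)
  then have "line_component v (coset_line y) \<in> V"
    unfolding ind_space_def by (auto simp: line_component_def)
  moreover have "line_component v (coset_line y) x = 0" if "x \<notin> H #> y" for x
    using that assms(2) coset_line_eq_iff rcos_self[OF _ subgroup_H]
    by (auto simp: line_component_def)
  ultimately show ?thesis unfolding coset_line_def by blast
qed

lemma sum_coset_lines_at:
  assumes "finite (carrier G)" and "c \<in> (\<Pi>\<^sub>E L\<in>coset_lines. L)" and "x \<in> carrier G"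
  shows "(\<Sum>L\<in>coset_lines. c L x) = c (coset_line x) x"
proof -
  have "coset_line x \<in> coset_lines" using assms(3) unfolding coset_lines_def by blast
  moreover have "c L x = 0" if "L \<in> coset_lines - {coset_line x}" for L
    using coset_line_vanishes[OF assms(3)] that assms(2) by (auto simp: PiE_iff)
  ultimately show ?thesis
    using assms(1) unfolding coset_lines_def by (simp add: sum.remove)
qed

lemma coset_lines_decomposition_unique:
  assumes "finite (carrier G)" and "c \<in> (\<Pi>\<^sub>E L\<in>coset_lines. L)"
    and "v = (\<lambda>x. \<Sum>L\<in>coset_lines. c L x)" and "L \<in> coset_lines"
  shows "c L = line_component v L"
proof
  fix x
  have cL: "c L \<in> L" using assms(2,4) by auto
  then have cV: "c L \<in> V" using assms(4) coset_line_subset unfolding coset_lines_def by blast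
  show "c L x = line_component v L x"
  proof (cases "x \<in> carrier G \<and> L = coset_line x")
    case True
    then have "v x = c L x" using assms(3) sum_coset_lines_at[OF assms(1,2)] by simp
    then show ?thesis using True by (simp add: line_component_def)
  next
    case False
    then have "c L x = 0"
      using coset_line_vanishes[OF _ assms(4) _ cL] ind_space_outside[OF cV] by blast
    then show ?thesis using False by (auto simp: line_component_def)
  qed
qed

lemma coset_lines_direct_sum:
  assumes "finite (carrier G)" and v: "v \<in> V"
  shows "\<exists>!c. c \<in> (\<Pi>\<^sub>E L\<in>coset_lines. L) \<and> v = (\<lambda>x. \<Sum>L\<in>coset_lines. c L x)"
proof -
  let ?c = "\<lambda>L\<in>coset_lines. line_component v L"
  have c: "?c \<in> (\<Pi>\<^sub>E L\<in>coset_lines. L)"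
    using line_component_mem[OF v] unfolding coset_lines_def by auto
  have "v x = (\<Sum>L\<in>coset_lines. ?c L x)" for x
  proof (cases "x \<in> carrier G")
    case True
    then have "coset_line x \<in> coset_lines" unfolding coset_lines_def by blast
    then show ?thesis
      using sum_coset_lines_at[OF assms(1) c True] True by (simp add: line_component_def)
  next
    case False
    then show ?thesis using ind_space_outside[OF v] by (simp add: line_component_def)
  qed
  then have "v = (\<lambda>x. \<Sum>L\<in>coset_lines. ?c L x)" by blast
  moreover have "c' = ?c"
    if "c' \<in> (\<Pi>\<^sub>E L\<in>coset_lines. L)" "v = (\<lambda>x. \<Sum>L\<in>coset_lines. c' L x)" for c'
    using coset_lines_decomposition_unique[OF assms(1) that] PiE_ext[OF that(1) c] by simp
  ultimately show ?thesis using c by (intro ex1I[of _ ?c]) auto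
qed

lemma monomial_structure_coset_lines:
  assumes "finite (carrier G)"
  shows "monomial_structure G V \<rho> coset_lines"
proof -
  have "\<exists>v\<in>V. v \<noteq> (\<lambda>x. 0) \<and> coset_line y = {(\<lambda>x. c * v x) | c. True}" if "y \<in> carrier G" for y
  proof -
    have "coset_fun y \<noteq> (\<lambda>x. 0)" using coset_fun_self[OF that] by force
    then show ?thesis using coset_fun_ind_space[OF that] coset_line_eq_span[OF that] by blast
  qed
  then have "\<forall>L\<in>coset_lines. \<exists>v\<in>V. v \<noteq> (\<lambda>x. 0) \<and> L = {(\<lambda>x. c * v x) | c. True}"
    unfolding coset_lines_def by blast
  moreover have "finite coset_lines" using assms unfolding coset_lines_def by blast
  moreover have "\<forall>g\<in>carrier G. \<forall>L\<in>coset_lines. \<rho> g ` L \<in> coset_lines"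
    using ind_act_coset_line unfolding coset_lines_def by auto
  moreover have "\<forall>v\<in>V. \<exists>!c. c \<in> (\<Pi>\<^sub>E L\<in>coset_lines. L) \<and> v = (\<lambda>x. \<Sum>L\<in>coset_lines. c L x)"
    by (intro ballI coset_lines_direct_sum[OF assms])
  ultimately show ?thesis unfolding monomial_structure_def by (intro conjI)
qed

end

section \<open>Solitary characters\<close>

lemma solitary_rep_iso_imp_conjugate:
  assumes "group G" and "finite (carrier G)" and "subgroup H1 G" and "subgroup H2 G"
    and "lin_char G H1 \<Xi>" and "lin_char G H2 \<chi>" and "G_solitary G H1 \<Xi>"
    and "rep_iso G (ind_space G H1 \<Xi>) (ind_act G) (ind_space G H2 \<chi>) (ind_act G)"
  obtains y where "y \<in> carrier G" and "H1 = (\<lambda>h. inv\<^bsub>G\<^esub> y \<otimes>\<^bsub>G\<^esub> h \<otimes>\<^bsub>G\<^esub> y) ` H2"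
proof -
  interpret I1: induced_rep G H1 \<Xi>
    using assms by (simp add: induced_rep_def induced_rep_axioms_def)
  interpret I2: induced_rep G H2 \<chi>
    using assms by (simp add: induced_rep_def induced_rep_axioms_def)
  let ?stab = "stabilizer G (\<lambda>g. image (ind_act G g))"
  obtain S where S: "bij_betw S I2.V I1.V" "lin_on I2.V S"
    and S_eqv: "\<forall>g\<in>carrier G. \<forall>v\<in>I2.V. S (ind_act G g v) = ind_act G g (S v)"
    using rep_iso_sym[OF assms(8) I1.lin_closed_ind_space I1.ind_act_closed] unfolding rep_iso_iff by blast
  have ms1: "monomial_structure G I1.V (ind_act G) I1.coset_lines"
    using I1.monomial_structure_coset_lines[OF assms(2)] .
  have "monomial_structure G I1.V (ind_act G) ((`) S ` I2.coset_lines)"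
    using monomial_structure_image[OF I2.monomial_structure_coset_lines[OF assms(2)]
        I2.lin_closed_ind_space S] S_eqv by blast
  then have "monomial_iso G (ind_act G) I1.coset_lines ((`) S ` I2.coset_lines)"
    using assms(7) ms1 unfolding G_solitary_def by blast
  moreover have "I1.coset_line \<one>\<^bsub>G\<^esub> \<in> I1.coset_lines" unfolding I1.coset_lines_def by simp
  ultimately obtain y where y: "y \<in> carrier G"
    and stab_eq: "?stab (S ` I2.coset_line y) = ?stab (I1.coset_line \<one>\<^bsub>G\<^esub>)"
    using monomial_iso_stabilizer[OF _ ms1] unfolding I2.coset_lines_def by blast
  have "H1 = ?stab (I1.coset_line \<one>\<^bsub>G\<^esub>)"
    using I1.stabilizer_coset_line[of "\<one>\<^bsub>G\<^esub>"] I1.H_subset by (auto simp: subset_iff)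
  also have "\<dots> = ?stab (S ` I2.coset_line y)"
    using stab_eq by simp
  also have "\<dots> = ?stab (I2.coset_line y)"
    by (rule stabilizer_image_equivariant[OF bij_betw_imp_inj_on[OF S(1)] I2.coset_line_subset])
      (use I2.ind_act_closed S_eqv in auto)
  also have "\<dots> = (\<lambda>h. inv\<^bsub>G\<^esub> y \<otimes>\<^bsub>G\<^esub> h \<otimes>\<^bsub>G\<^esub> y) ` H2"
    using I2.stabilizer_coset_line[OF y] .
  finally show ?thesis using that y by blast
qed

theorem lemma4p4:
  fixes G :: "('g, 'b) monoid_scheme" and H1 H2 :: "'g set" and \<Xi> :: "'g \<Rightarrow> complex"
  assumes "group G" and "finite (carrier G)"
    and "subgroup H1 G" and "subgroup H2 G"
    and "lin_char G H1 \<Xi>" and "G_solitary G H1 \<Xi>"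
  shows "(\<exists>\<chi>. lin_char G H2 \<chi> \<and>
            rep_iso G (ind_space G H1 \<Xi>) (ind_act G) (ind_space G H2 \<chi>) (ind_act G))
         \<longleftrightarrow> (\<exists>g\<in>carrier G. H2 = (\<lambda>h. inv\<^bsub>G\<^esub> g \<otimes>\<^bsub>G\<^esub> h \<otimes>\<^bsub>G\<^esub> g) ` H1)"
proof
  assume "\<exists>\<chi>. lin_char G H2 \<chi> \<and>
            rep_iso G (ind_space G H1 \<Xi>) (ind_act G) (ind_space G H2 \<chi>) (ind_act G)"
  then obtain y where y: "y \<in> carrier G" and "H1 = (\<lambda>h. inv\<^bsub>G\<^esub> y \<otimes>\<^bsub>G\<^esub> h \<otimes>\<^bsub>G\<^esub> y) ` H2"
    using solitary_rep_iso_imp_conjugate assms by metis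
  then have "H2 = (\<lambda>h. inv\<^bsub>G\<^esub> (inv\<^bsub>G\<^esub> y) \<otimes>\<^bsub>G\<^esub> h \<otimes>\<^bsub>G\<^esub> inv\<^bsub>G\<^esub> y) ` H1"
    using group.conj_image_conj_image[OF assms(1) subgroup.subset[OF assms(4)] y] assms(1) by simp
  then show "\<exists>g\<in>carrier G. H2 = (\<lambda>h. inv\<^bsub>G\<^esub> g \<otimes>\<^bsub>G\<^esub> h \<otimes>\<^bsub>G\<^esub> g) ` H1"
    using group.inv_closed[OF assms(1) y] by blast
next
  assume "\<exists>g\<in>carrier G. H2 = (\<lambda>h. inv\<^bsub>G\<^esub> g \<otimes>\<^bsub>G\<^esub> h \<otimes>\<^bsub>G\<^esub> g) ` H1"
  then obtain g where "g \<in> carrier G" and "H2 = (\<lambda>h. inv\<^bsub>G\<^esub> g \<otimes>\<^bsub>G\<^esub> h \<otimes>\<^bsub>G\<^esub> g) ` H1" by blast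
  then show "\<exists>\<chi>. lin_char G H2 \<chi> \<and>
            rep_iso G (ind_space G H1 \<Xi>) (ind_act G) (ind_space G H2 \<chi>) (ind_act G)"
    using group.lin_char_conj[OF assms(1,3,5)] group.rep_iso_ind_space_conj[OF assms(1,3)] by blast
qed

end
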